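(* Let $N\ge2$ and consider the opinion process on the one-dimensional graph with vertices labelled $0,1,\dots,N$ (vertex $k$ corresponding to the point $k/N$), boundary vertices $0$ and $N$ with boundary opinions $T_-:=T_0$ and $T_+:=T_N$, internal vertices $1,\dots,N-1$, and edges $\{k,k+1\}$ for $k=1,\dots,N-1$ oriented from $k$ to $k+1$ together with the edge from $1$ to $0$. Let $\nu^O$ be its invariant measure and $C^N_{k,\ell}:=\mathbb E_{\nu^O}(O_kO_\ell)-\mathbb E_{\nu^O}(O_k)\mathbb E_{\nu^O}(O_\ell)$. Then for $0\le k\le\ell\le N$, $C^N_{k,\ell}\le\tilde C_{k,\ell}$, where $\tilde C_{k,\ell}=\frac{(T_+-T_-)^2}{N+1}\frac kN\left(1-\frac\ell N\right)$ if $k<\ell$, and $\tilde C_{k,k}=\frac{(T_+-T_-)^2}{N+1}\frac kN\left(1-\frac kN\right)+\frac{(T_+-T_-)^2}{2N(N+1)}$.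
   Context: Opinion process on a finite oriented graph $(\overline{\mathbb V},\overline E)$ with internal vertices $\mathbb V$, boundary vertices $\partial\mathbb V$, boundary edges oriented $ij$ with $i\in\mathbb V$, $j\in\partial\mathbb V$, and fixed boundary values $T_j>0$: the Markov process on $\mathbb R_+^{\overline{\mathbb V}}$ with $O_j\equiv T_j$ for $j\in\partial\mathbb V$ and generator $L^Of(O)=\sum_{ij\in\overline E}\int_0^1dv\,[f(H^O_{ij;v}O)-f(O)]$, where $(H^O_{ij;v}O)_\ell=vO_i+(1-v)O_j$ for $\ell\in\{i,j\}\cap\mathbb V$ and $(H^O_{ij;v}O)_\ell=O_\ell$ otherwise. That is, at rate 1 for each edge $ij$, a value uniform between $O_i$ and $O_j$ is drawn and adopted by the internal endpoints. It has a unique invariant probability measure $\nu^O$. *)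

theory Defs
  imports "HOL-Probability.Probability"
begin

definition opinion_space :: "nat \<Rightarrow> (nat \<Rightarrow> real) measure" where
  "opinion_space N = PiM {0..N} (\<lambda>_. borel)"

definition internal_vertices :: "nat \<Rightarrow> nat set" where
  "internal_vertices N = {1..N-1}"

definition opinion_edges :: "nat \<Rightarrow> (nat \<times> nat) set" where
  "opinion_edges N = insert (1, 0) {(k, Suc k) | k. 1 \<le> k \<and> k \<le> N - 1}"

definition opinion_update :: "nat \<Rightarrow> nat \<Rightarrow> nat \<Rightarrow> real \<Rightarrow> (nat \<Rightarrow> real) \<Rightarrow> (nat \<Rightarrow> real)" where
  "opinion_update N i j v x =
     (\<lambda>l. if l \<in> {i, j} \<inter> internal_vertices N then v * x i + (1 - v) * x j else x l)"

definition opinion_generator :: "nat \<Rightarrow> ((nat \<Rightarrow> real) \<Rightarrow> real) \<Rightarrow> (nat \<Rightarrow> real) \<Rightarrow> real" where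
  "opinion_generator N f x =
     (\<Sum>(i, j)\<in>opinion_edges N. LINT v:{0..1}|lborel. (f (opinion_update N i j v x) - f x))"

text \<open>Invariant probability measure of the process (bounded generator: invariance
  means the integral of L f vanishes for every bounded measurable f), concentrated on
  the state space nonneg configurations with fixed boundary values.\<close>
definition opinion_invariant :: "nat \<Rightarrow> real \<Rightarrow> real \<Rightarrow> (nat \<Rightarrow> real) measure \<Rightarrow> bool" where
  "opinion_invariant N Tm Tp \<nu> \<longleftrightarrow>
     prob_space \<nu> \<and> sets \<nu> = sets (opinion_space N) \<and>
     (AE x in \<nu>. x 0 = Tm \<and> x N = Tp \<and> (\<forall>k\<in>{0..N}. 0 \<le> x k)) \<and>
     (\<forall>f \<in> borel_measurable (opinion_space N). (\<exists>B. \<forall>x. \<bar>f x\<bar> \<le> B) \<longrightarrow>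
        (\<integral>x. opinion_generator N f x \<partial>\<nu>) = 0)"

definition opinion_cov :: "(nat \<Rightarrow> real) measure \<Rightarrow> nat \<Rightarrow> nat \<Rightarrow> real" where
  "opinion_cov \<nu> k l = (\<integral>x. x k * x l \<partial>\<nu>) - (\<integral>x. x k \<partial>\<nu>) * (\<integral>x. x l \<partial>\<nu>)"

definition C_tilde :: "nat \<Rightarrow> real \<Rightarrow> real \<Rightarrow> nat \<Rightarrow> nat \<Rightarrow> real" where
  "C_tilde N Tm Tp k l =
     (if k < l then (Tp - Tm)^2 / (real N + 1) * (real k / real N) * (1 - real l / real N)
      else (Tp - Tm)^2 / (real N + 1) * (real k / real N) * (1 - real k / real N)
           + (Tp - Tm)^2 / (2 * real N * (real N + 1)))"

end

theory Submission
  imports Defs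
begin

(* Testing invariance against the truncated Lyapunov function sum_k ((x_k - max Tm Tp)_+)^2,
   whose expected increment is nonpositive along every edge and negative along the edge entering
   the leftmost internal vertex above max Tm Tp, shows that the invariant measure lives on
   configurations with values in [0, max Tm Tp]. Testing it against the (clipped) observables
   x_k x_0 and x_k x_l then gives the moment equations: the means are discrete harmonic, hence
   linear, and the second moments S solve a discrete elliptic equation moment_op S = 0 for
   1 <= k <= l <= N-1. The explicit function whose covariance part is C_tilde solves the same
   equation and dominates S on the boundary, so a minimum principle (with the strict
   supersolution k(N-k) + l(N-l) + 1 as barrier) gives the bound. *)

section \<open>A discrete elliptic operator on second moments\<close>

text \<open>For S a b = x a * x b and internal 1 \<le> k \<le> l this is the opinion generator applied to
  x k * x l: the first two groups of terms are x l and x k times the drifts of x k and x l, the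
  conditional term is the covariance of the jumps along the edges at k.\<close>
definition moment_op :: "(nat \<Rightarrow> nat \<Rightarrow> real) \<Rightarrow> nat \<Rightarrow> nat \<Rightarrow> real" where
  "moment_op S k l =
     (S l (k-1) + S l (k+1)) / 2 - S l k + (S k (l-1) + S k (l+1)) / 2 - S k l
     + (if l = k then (S (k-1) (k-1) - 2 * S (k-1) k + S k k) / 3
                      + (S k k - 2 * S k (k+1) + S (k+1) (k+1)) / 3
        else if l = k+1 then - (S k k - 2 * S k l + S l l) / 6 else 0)"

lemma moment_op_add: "moment_op (\<lambda>a b. P a b + Q a b) k l = moment_op P k l + moment_op Q k l"
  unfolding moment_op_def by (simp add: algebra_simps add_divide_distrib diff_divide_distrib)

lemma moment_op_diff: "moment_op (\<lambda>a b. P a b - Q a b) k l = moment_op P k l - moment_op Q k l"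
  unfolding moment_op_def by (simp add: algebra_simps add_divide_distrib diff_divide_distrib)

lemma moment_op_cmult: "moment_op (\<lambda>a b. c * P a b) k l = c * moment_op P k l"
  unfolding moment_op_def by (simp add: algebra_simps add_divide_distrib diff_divide_distrib)

lemma moment_op_nonneg_at_zero:
  assumes sym: "\<And>a b. F a b = F b a" and nonneg: "\<And>a b. a \<le> N \<Longrightarrow> b \<le> N \<Longrightarrow> 0 \<le> F a b"
    and zero: "F k l = 0" and kl: "1 \<le> k" "k \<le> l" "l \<le> N - 1"
  shows "0 \<le> moment_op F k l"
proof -
  have nn: "0 \<le> F l (k-1)" "0 \<le> F l (k+1)" "0 \<le> F k (l-1)" "0 \<le> F k (l+1)"
     "0 \<le> F (k-1) (k-1)" "0 \<le> F (k+1) (k+1)" "0 \<le> F k (k+1)"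
    using nonneg kl by auto
  have "F l k = 0" using zero sym by metis
  consider "l = k" | "l = k + 1" | "l \<noteq> k \<and> l \<noteq> k + 1" by blast
  then show ?thesis
  proof cases
    case 1
    have "F (k-1) k = F k (k-1)" using sym by metis
    then have "moment_op F k l = (F k (k-1) + F k (k+1) + F (k-1) (k-1) + F (k+1) (k+1)) / 3"
      using 1 zero unfolding moment_op_def by (simp add: field_simps)
    then show ?thesis using 1 nn by simp
  next
    case 2
    then show ?thesis using zero nn \<open>F l k = 0\<close> unfolding moment_op_def by (simp add: field_simps)
  qed (use zero nn \<open>F l k = 0\<close> in \<open>simp add: moment_op_def\<close>)
qed

definition moment_weight :: "nat \<Rightarrow> nat \<Rightarrow> nat \<Rightarrow> real" where
  "moment_weight N a b = real a * (real N - real a) + real b * (real N - real b) + 1"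

lemma moment_weight_pos: "a \<le> N \<Longrightarrow> b \<le> N \<Longrightarrow> 0 < moment_weight N a b"
  unfolding moment_weight_def by (simp add: add_nonneg_pos)

lemma moment_op_moment_weight_neg:
  assumes "1 \<le> k" "k \<le> l"
  shows "moment_op (moment_weight N) k l < 0"
proof -
  obtain k' where k': "k = Suc k'" using assms by (cases k) auto
  obtain l' where l': "l = Suc l'" using assms by (cases l) auto
  consider "l = k" | "l = k + 1" | "l \<noteq> k \<and> l \<noteq> k + 1" by blast
  then show ?thesis
    by cases (simp_all add: moment_op_def moment_weight_def k' l' algebra_simps)
qed

lemma finite_symmetric_min_ordered:
  fixes g :: "nat \<Rightarrow> nat \<Rightarrow> real"
  assumes sym: "\<And>a b. g a b = g b a"
  obtains k l where "k \<le> l" "l \<le> N" "\<And>a b. a \<le> N \<Longrightarrow> b \<le> N \<Longrightarrow> g k l \<le> g a b"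
proof -
  define P where "P = {0..N} \<times> {0..N}"
  define p where "p = arg_min_on (case_prod g) P"
  have P: "finite P" "P \<noteq> {}" unfolding P_def by auto
  have p: "fst p \<le> N" "snd p \<le> N"
    using arg_min_if_finite(1)[OF P, of "case_prod g"] unfolding p_def P_def by auto
  have min: "g (fst p) (snd p) \<le> g a b" if "a \<le> N" "b \<le> N" for a b
    using arg_min_least[OF P, of "(a, b)" "case_prod g"] that unfolding p_def P_def
    by (simp add: case_prod_beta)
  show ?thesis
  proof (cases "fst p \<le> snd p")
    case True
    with p min show ?thesis by (intro that[of "fst p" "snd p"])
  next
    case False
    with p min sym show ?thesis by (intro that[of "snd p" "fst p"]) auto
  qed
qed

lemma moment_op_minimum_principle:
  fixes D :: "nat \<Rightarrow> nat \<Rightarrow> real"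
  assumes sym: "\<And>a b. D a b = D b a"
    and boundary: "\<And>a b. a \<le> N \<Longrightarrow> b \<le> N \<Longrightarrow> a \<in> {0, N} \<or> b \<in> {0, N} \<Longrightarrow> 0 \<le> D a b"
    and harmonic: "\<And>k l. 1 \<le> k \<Longrightarrow> k \<le> l \<Longrightarrow> l \<le> N - 1 \<Longrightarrow> moment_op D k l = 0"
    and ab: "a \<le> N" "b \<le> N"
  shows "0 \<le> D a b"
proof (rule ccontr)
  assume neg: "\<not> 0 \<le> D a b"
  define w where "w = moment_weight N"
  have w_sym: "w x y = w y x" for x y unfolding w_def moment_weight_def by simp
  have w_pos: "0 < w x y" if "x \<le> N" "y \<le> N" for x y
    using moment_weight_pos[OF that] by (simp add: w_def)
  obtain k l where kl: "k \<le> l" "l \<le> N"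
    and r_le: "\<And>x y. x \<le> N \<Longrightarrow> y \<le> N \<Longrightarrow> D k l / w k l \<le> D x y / w x y"
    using finite_symmetric_min_ordered[of "\<lambda>x y. D x y / w x y"] sym w_sym by metis
  define r where "r = D k l / w k l"
  have "r < 0"
    using r_le[OF ab] neg w_pos[OF ab] by (simp add: r_def divide_neg_pos order.strict_trans1)
  \<comment> \<open>Shifting D by the minimal multiple of the strictly supersolving weight w produces a
     nonnegative function vanishing at (k, l), which contradicts moment_op w < 0 there.\<close>
  define F where "F = (\<lambda>x y. D x y - r * w x y)"
  have F_sym: "F x y = F y x" for x y unfolding F_def using sym w_sym by simp
  have F_nonneg: "0 \<le> F x y" if "x \<le> N" "y \<le> N" for x y
    using r_le[OF that] w_pos[OF that] by (simp add: F_def r_def pos_le_divide_eq)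
  have F_kl: "F k l = 0" using w_pos[OF order.trans[OF kl] kl(2)] by (simp add: F_def r_def)
  have "\<not> (k \<in> {0, N} \<or> l \<in> {0, N})"
  proof
    assume "k \<in> {0, N} \<or> l \<in> {0, N}"
    then have "0 \<le> D k l" using boundary kl by auto
    then have "0 \<le> r" using w_pos[OF order.trans[OF kl] kl(2)] by (simp add: r_def)
    then show False using \<open>r < 0\<close> by simp
  qed
  with kl have interior: "1 \<le> k" "l \<le> N - 1" by auto
  have "0 \<le> moment_op F k l"
    using moment_op_nonneg_at_zero[OF F_sym F_nonneg F_kl interior(1) kl(1) interior(2)] .
  moreover have "moment_op F k l = - r * moment_op w k l"
    using harmonic[OF interior(1) kl(1) interior(2)]
    by (simp add: F_def moment_op_diff moment_op_cmult)
  moreover have "moment_op w k l < 0"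
    unfolding w_def using moment_op_moment_weight_neg interior kl by simp
  ultimately show False using mult_neg_neg[OF \<open>r < 0\<close>] by fastforce
qed

definition linear_profile :: "nat \<Rightarrow> real \<Rightarrow> real \<Rightarrow> nat \<Rightarrow> real" where
  "linear_profile N Tm Tp a = Tm + real a * ((Tp - Tm) / real N)"

definition green_chain :: "nat \<Rightarrow> nat \<Rightarrow> nat \<Rightarrow> real" where
  "green_chain N a b = real (min a b) * (real N - real (max a b))"

definition second_moment_majorant :: "nat \<Rightarrow> real \<Rightarrow> real \<Rightarrow> nat \<Rightarrow> nat \<Rightarrow> real" where
  "second_moment_majorant N Tm Tp a b =
     ((Tp - Tm) / real N)^2 / (real N + 1) * green_chain N a b
     + ((Tp - Tm) / real N)^2 * real N / (2 * (real N + 1)) * of_bool (a = b)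
     + linear_profile N Tm Tp a * linear_profile N Tm Tp b"

lemma moment_op_green_chain:
  assumes "1 \<le> k" "k \<le> l"
  shows "moment_op (green_chain N) k l =
    (if l = k then - (real N + 2) / 3 else if l = k + 1 then - (real N - 1) / 6 else 0)"
proof -
  have "l = k \<or> l = k + 1 \<or> l = k + 2 + (l - k - 2)" using assms(2) by linarith
  then consider "l = k" | "l = k + 1" | j where "l = k + 2 + j" by blast
  then show ?thesis
    using assms(1)
    by cases (cases k; auto simp: moment_op_def green_chain_def min_def max_def field_simps)+
qed

lemma moment_op_diagonal:
  assumes "1 \<le> k" "k \<le> l"
  shows "moment_op (\<lambda>a b. of_bool (a = b)) k l =
    (if l = k then - 2 / 3 else if l = k + 1 then 2 / 3 else 0)"
  using assms by (cases k) (auto simp: moment_op_def)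

lemma moment_op_affine_product:
  assumes "1 \<le> k" "k \<le> l"
  shows "moment_op (\<lambda>a b. (T + real a * d) * (T + real b * d)) k l =
    (if l = k then 2 * d^2 / 3 else if l = k + 1 then - (d^2) / 6 else 0)"
  using assms by (cases k; cases l) (auto simp: moment_op_def field_simps power2_eq_square)

lemma moment_op_second_moment_majorant:
  assumes "1 \<le> k" "k \<le> l" "N \<ge> 1"
  shows "moment_op (second_moment_majorant N Tm Tp) k l = 0"
proof -
  define d where "d = (Tp - Tm) / real N"
  have "moment_op (second_moment_majorant N Tm Tp) k l =
      d^2 / (real N + 1) * moment_op (green_chain N) k l
      + d^2 * real N / (2 * (real N + 1)) * moment_op (\<lambda>a b. of_bool (a = b)) k l
      + moment_op (\<lambda>a b. (Tm + real a * d) * (Tm + real b * d)) k l"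
    unfolding second_moment_majorant_def linear_profile_def d_def moment_op_add moment_op_cmult ..
  also have "\<dots> = 0"
  proof -
    define c where "c = d^2 / (real N + 1)"
    have "d^2 = c * (real N + 1)" "d^2 * real N / (2 * (real N + 1)) = c * real N / 2"
      unfolding c_def by (simp_all add: field_simps add_pos_pos)
    then show ?thesis
      unfolding moment_op_green_chain[OF assms(1,2)] moment_op_diagonal[OF assms(1,2)]
        moment_op_affine_product[OF assms(1,2)] c_def[symmetric]
      by (simp add: field_simps)
  qed
  finally show ?thesis .
qed

lemma discrete_harmonic_eq_linear_profile:
  fixes m :: "nat \<Rightarrow> real"
  assumes N: "N \<ge> 1" and m0: "m 0 = Tm" and mN: "m N = Tp"
    and harmonic: "\<And>k. 1 \<le> k \<Longrightarrow> k \<le> N - 1 \<Longrightarrow> (m (k-1) + m (k+1)) / 2 - m k = 0"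
    and "a \<le> N"
  shows "m a = linear_profile N Tm Tp a"
proof -
  define d where "d = m 1 - m 0"
  have step: "m (Suc a) - m a = d" if "Suc a \<le> N" for a
    using that
  proof (induction a)
    case (Suc a)
    have "(m a + m (Suc (Suc a))) / 2 - m (Suc a) = 0"
      using harmonic[of "Suc a"] Suc.prems by simp
    then show ?case using Suc by simp
  qed (simp add: d_def)
  have linear: "m a = Tm + real a * d" if "a \<le> N" for a
    using that by (induction a) (use m0 step in \<open>auto simp: algebra_simps\<close>)
  have "d = (Tp - Tm) / real N" using linear[of N] mN N by (simp add: field_simps)
  then show ?thesis using linear[OF \<open>a \<le> N\<close>] unfolding linear_profile_def by simp
qed

lemma second_moment_majorant_cov:
  assumes N: "N \<ge> 1" and kl: "k \<le> l" "l \<le> N"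
  shows "second_moment_majorant N Tm Tp k l - linear_profile N Tm Tp k * linear_profile N Tm Tp l
    = C_tilde N Tm Tp k l"
proof -
  define d where "d = (Tp - Tm) / real N"
  have N_ne: "real N \<noteq> 0" "real N + 1 \<noteq> 0" using N by auto
  have green: "d^2 / (real N + 1) * green_chain N k l
      = (Tp - Tm)^2 / (real N + 1) * (real k / real N) * (1 - real l / real N)"
    using kl N_ne by (simp add: d_def green_chain_def power_divide power2_eq_square field_simps)
  have "d^2 * real N = (Tp - Tm)^2 / real N"
    using N_ne by (simp add: d_def power_divide power2_eq_square)
  then have diagonal:
      "d^2 * real N / (2 * (real N + 1)) = (Tp - Tm)^2 / (2 * real N * (real N + 1))"
    by (simp add: mult.commute)
  show ?thesis
    using green diagonal kl by (auto simp: second_moment_majorant_def C_tilde_def d_def)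
qed

lemma cov_le_C_tilde_of_moment_equations:
  fixes S :: "nat \<Rightarrow> nat \<Rightarrow> real" and m :: "nat \<Rightarrow> real"
  assumes N: "N \<ge> 1"
    and m0: "m 0 = Tm" and mN: "m N = Tp"
    and m_harmonic: "\<And>k. 1 \<le> k \<Longrightarrow> k \<le> N - 1 \<Longrightarrow> (m (k-1) + m (k+1)) / 2 - m k = 0"
    and S_sym: "\<And>a b. S a b = S b a"
    and S0: "\<And>b. b \<le> N \<Longrightarrow> S 0 b = Tm * m b"
    and SN: "\<And>b. b \<le> N \<Longrightarrow> S N b = Tp * m b"
    and S_harmonic: "\<And>k l. 1 \<le> k \<Longrightarrow> k \<le> l \<Longrightarrow> l \<le> N - 1 \<Longrightarrow> moment_op S k l = 0"
    and kl: "k \<le> l" "l \<le> N"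
  shows "S k l - m k * m l \<le> C_tilde N Tm Tp k l"
proof -
  let ?G = "second_moment_majorant N Tm Tp"
  have m_linear: "m a = linear_profile N Tm Tp a" if "a \<le> N" for a
    using discrete_harmonic_eq_linear_profile[OF N m0 mN m_harmonic that] .
  have D_sym: "?G a b - S a b = ?G b a - S b a" for a b
    using S_sym by (simp add: second_moment_majorant_def green_chain_def min.commute max.commute
        mult.commute eq_commute)
  have boundary_row: "0 \<le> ?G a b - S a b" if "a \<in> {0, N}" "b \<le> N" for a b
  proof -
    have "S a b = linear_profile N Tm Tp a * linear_profile N Tm Tp b"
      using that S0 SN m_linear N by (auto simp: linear_profile_def)
    moreover have "green_chain N a b = 0" using that by (auto simp: green_chain_def)
    ultimately show ?thesis by (simp add: second_moment_majorant_def)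
  qed
  have "0 \<le> ?G a b - S a b" if "a \<le> N" "b \<le> N" for a b
  proof (rule moment_op_minimum_principle[OF D_sym _ _ that])
    show "0 \<le> ?G a b - S a b" if "a \<le> N" "b \<le> N" "a \<in> {0, N} \<or> b \<in> {0, N}" for a b
      using that boundary_row[of a b] boundary_row[of b a] D_sym[of a b] by auto
    show "moment_op (\<lambda>a b. ?G a b - S a b) k l = 0" if "1 \<le> k" "k \<le> l" "l \<le> N - 1" for k l
      using that moment_op_second_moment_majorant[OF that(1,2) N] S_harmonic[OF that]
      by (simp add: moment_op_diff)
  qed
  then have "S k l \<le> ?G k l" using kl by force
  moreover have "?G k l - m k * m l = C_tilde N Tm Tp k l"
    using second_moment_majorant_cov[OF N kl] m_linear[of k] m_linear[of l] kl by simp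
  ultimately show ?thesis by simp
qed

lemma unit_integral_quadratic:
  fixes a b c :: real
  shows "(LINT v:{0..1}|lborel. a + b * v + c * v^2) = a + b / 2 + c / 3"
proof -
  have "(LINT v:{0..1}|lborel. a + b * v + c * v^2) =
        (\<lambda>v. a * v + b * v^2 / 2 + c * v^3 / 3) 1 - (\<lambda>v. a * v + b * v^2 / 2 + c * v^3 / 3) 0"
    unfolding set_lebesgue_integral_def
    by (rule integral_FTC_atLeastAtMost)
       (auto intro!: derivative_eq_intros continuous_intros
             simp: has_real_derivative_iff_has_vector_derivative[symmetric] power2_eq_square
                   power3_eq_cube field_simps)
  then show ?thesis by simp
qed

lemma set_integrable_quadratic: "set_integrable lborel {0..1} (\<lambda>v::real. a + b * v + c * v^2)"
  unfolding set_integrable_def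
  using borel_integrable_atLeastAtMost[of 0 1 "\<lambda>v. a + b * v + c * v^2"]
  by (simp add: mult.commute)

lemma unit_integral_le_quadratic:
  fixes g :: "real \<Rightarrow> real"
  assumes "set_integrable lborel {0..1} g" "\<And>v. 0 \<le> v \<Longrightarrow> v \<le> 1 \<Longrightarrow> g v \<le> a + b * v + c * v^2"
  shows "(LINT v:{0..1}|lborel. g v) \<le> a + b / 2 + c / 3"
proof -
  have "(LINT v:{0..1}|lborel. g v) \<le> (LINT v:{0..1}|lborel. a + b * v + c * v^2)"
    using assms set_integrable_quadratic by (intro set_integral_mono) auto
  then show ?thesis using unit_integral_quadratic by simp
qed

lemma abs_unit_integral_le:
  fixes g :: "real \<Rightarrow> real"
  assumes "\<And>v. \<bar>g v\<bar> \<le> B"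
  shows "\<bar>LINT v:{0..1}|lborel. g v\<bar> \<le> B"
proof -
  have "0 \<le> B" using assms[of 0] by simp
  have "\<bar>LINT v:{0..1}|lborel. g v\<bar> \<le> (\<integral>v. norm (indicator {0..1} v *\<^sub>R g v) \<partial>lborel)"
    unfolding set_lebesgue_integral_def
    using integral_norm_bound[of lborel "\<lambda>v. indicator {0..1} v *\<^sub>R g v"] by simp
  also have "\<dots> \<le> (\<integral>v. indicator {0..1} v *\<^sub>R (B + 0 * v + 0 * v^2) \<partial>lborel)"
  proof (rule integral_mono_AE')
    show "integrable lborel (\<lambda>v. indicator {0..1} v *\<^sub>R (B + 0 * v + 0 * v^2))"
      using set_integrable_quadratic[of B 0 0] unfolding set_integrable_def .
    show "AE v in lborel.
        norm (indicator {0..1} v *\<^sub>R g v) \<le> indicator {0..1} v *\<^sub>R (B + 0 * v + 0 * v^2)"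
      using assms by (auto simp: indicator_def)
    show "AE v in lborel. 0 \<le> indicator {0..1} v *\<^sub>R (B + 0 * v + 0 * v^2)"
      using \<open>0 \<le> B\<close> by (auto simp: indicator_def)
  qed
  also have "\<dots> = B"
    using unit_integral_quadratic[of B 0 0] unfolding set_lebesgue_integral_def by simp
  finally show ?thesis .
qed

lemma set_integrable_unit_bounded:
  fixes g :: "real \<Rightarrow> real"
  assumes "g \<in> borel_measurable lborel" "\<And>v. \<bar>g v\<bar> \<le> B"
  shows "set_integrable lborel {0..1} g"
proof (rule set_integrable_bound[OF set_integrable_quadratic[of B 0 0]])
  show "set_borel_measurable lborel {0..1} g"
    using assms(1) unfolding set_borel_measurable_def by measurable
  show "AE v in lborel. v \<in> {0..1} \<longrightarrow> norm (g v) \<le> norm (B + 0 * v + 0 * v^2)"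
    using assms(2) by (auto intro: order_trans[OF _ abs_ge_self])
qed

abbreviation edge_increment ::
    "nat \<Rightarrow> ((nat \<Rightarrow> real) \<Rightarrow> real) \<Rightarrow> nat \<Rightarrow> nat \<Rightarrow> (nat \<Rightarrow> real) \<Rightarrow> real" where
  "edge_increment N f i j x \<equiv> LINT v:{0..1}|lborel. (f (opinion_update N i j v x) - f x)"

lemma opinion_edges_eq: "opinion_edges N = insert (1, 0) ((\<lambda>k. (k, Suc k)) ` {1..<N})"
  unfolding opinion_edges_def by force

lemma finite_opinion_edges: "finite (opinion_edges N)"
  by (simp add: opinion_edges_eq)

lemma opinion_edgeD: "(i, j) \<in> opinion_edges N \<Longrightarrow> N \<ge> 2 \<Longrightarrow> i \<in> {1..N-1} \<and> j \<le> N \<and> i \<noteq> j"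
  unfolding opinion_edges_def by auto

lemma sum_opinion_edges_as_path:
  assumes "N \<ge> 2" and "h 1 0 = h 0 1"
  shows "(\<Sum>(i, j)\<in>opinion_edges N. h i j) = (\<Sum>m<N. h m (Suc m))"
proof -
  have "(\<Sum>(i, j)\<in>opinion_edges N. h i j) = h 1 0 + (\<Sum>(i, j)\<in>(\<lambda>m. (m, Suc m)) ` {1..<N}. h i j)"
    unfolding opinion_edges_eq by (subst sum.insert) auto
  also have "(\<Sum>(i, j)\<in>(\<lambda>m. (m, Suc m)) ` {1..<N}. h i j) = (\<Sum>m\<in>{1..<N}. h m (Suc m))"
    by (subst sum.reindex) (auto simp: inj_on_def)
  also have "h 1 0 + (\<Sum>m\<in>{1..<N}. h m (Suc m)) = (\<Sum>m<N. h m (Suc m))"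
    using assms by (simp add: lessThan_atLeast0 sum.atLeast_Suc_lessThan)
  finally show ?thesis .
qed

lemma space_opinion_space: "space (opinion_space N) = PiE {0..N} (\<lambda>_. UNIV)"
  unfolding opinion_space_def by (simp add: space_PiM)

lemma opinion_update_in_space:
  "x \<in> space (opinion_space N) \<Longrightarrow> opinion_update N i j v x \<in> space (opinion_space N)"
  unfolding space_opinion_space opinion_update_def internal_vertices_def PiE_def extensional_def
  by auto

lemma measurable_opinion_update:
  assumes "(i, j) \<in> opinion_edges N" "N \<ge> 2"
  shows "(\<lambda>p. opinion_update N i j (snd p) (fst p))
    \<in> measurable (opinion_space N \<Otimes>\<^sub>M lborel) (opinion_space N)"
  unfolding opinion_space_def
proof (rule measurable_PiM_single')
  have ij: "i \<in> {0..N}" "j \<in> {0..N}" using opinion_edgeD[OF assms] by auto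
  show "(\<lambda>p. opinion_update N i j (snd p) (fst p) l)
      \<in> borel_measurable (Pi\<^sub>M {0..N} (\<lambda>_. borel) \<Otimes>\<^sub>M lborel)" if "l \<in> {0..N}" for l
    unfolding opinion_update_def using ij that by measurable
  show "(\<lambda>p. opinion_update N i j (snd p) (fst p))
      \<in> space (Pi\<^sub>M {0..N} (\<lambda>_. borel) \<Otimes>\<^sub>M lborel) \<rightarrow> (\<Pi>\<^sub>E i\<in>{0..N}. space borel)"
  proof
    fix p :: "(nat \<Rightarrow> real) \<times> real" assume "p \<in> space (Pi\<^sub>M {0..N} (\<lambda>_. borel) \<Otimes>\<^sub>M lborel)"
    then have "fst p \<in> space (opinion_space N)"
      by (auto simp: space_pair_measure opinion_space_def)
    from opinion_update_in_space[OF this]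
    show "opinion_update N i j (snd p) (fst p) \<in> (\<Pi>\<^sub>E i\<in>{0..N}. space borel)"
      by (simp add: space_opinion_space)
  qed
qed

lemma borel_measurable_opinion_generator:
  assumes f: "f \<in> borel_measurable (opinion_space N)" and "N \<ge> 2"
  shows "opinion_generator N f \<in> borel_measurable (opinion_space N)"
  unfolding opinion_generator_def
proof (intro borel_measurable_sum, clarify)
  fix i j assume e: "(i, j) \<in> opinion_edges N"
  have "(\<lambda>p. indicator {0..1::real} (snd p) *\<^sub>R
          (f (opinion_update N i j (snd p) (fst p)) - f (fst p)))
      \<in> borel_measurable (opinion_space N \<Otimes>\<^sub>M lborel)"
    using measurable_compose[OF measurable_opinion_update[OF e \<open>N \<ge> 2\<close>] f]
      measurable_compose[OF measurable_fst f] by measurable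
  then show "(\<lambda>x. edge_increment N f i j x) \<in> borel_measurable (opinion_space N)"
    unfolding set_lebesgue_integral_def
    by (intro lborel.borel_measurable_lebesgue_integral) (simp add: case_prod_beta')
qed

lemma abs_opinion_generator_le:
  assumes "\<And>x. \<bar>f x\<bar> \<le> B"
  shows "\<bar>opinion_generator N f x\<bar> \<le> real (card (opinion_edges N)) * (2 * B)"
proof -
  have "\<bar>opinion_generator N f x\<bar> \<le> (\<Sum>e\<in>opinion_edges N. 2 * B)"
    unfolding opinion_generator_def
  proof (rule order_trans[OF sum_abs], rule sum_mono, clarify)
    fix i j
    have "\<bar>f (opinion_update N i j v x) - f x\<bar> \<le> 2 * B" for v
      using assms[of x] assms[of "opinion_update N i j v x"] by linarith
    then show "\<bar>edge_increment N f i j x\<bar> \<le> 2 * B" by (rule abs_unit_integral_le)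
  qed
  then show ?thesis by simp
qed

section \<open>A truncated Lyapunov function\<close>

definition sq_excess :: "real \<Rightarrow> real \<Rightarrow> real" where
  "sq_excess h t = (max (t - h) 0)^2"

lemma sq_excess_nonneg: "0 \<le> sq_excess h t"
  unfolding sq_excess_def by simp

lemma sq_excess_eq_0: "t \<le> h \<Longrightarrow> sq_excess h t = 0"
  unfolding sq_excess_def by simp

lemma sq_excess_pos: "h < t \<Longrightarrow> 0 < sq_excess h t"
  unfolding sq_excess_def by simp

lemma sq_excess_convex:
  assumes v: "0 \<le> v" "v \<le> 1"
  shows "sq_excess h (v * a + (1 - v) * b) \<le> v * sq_excess h a + (1 - v) * sq_excess h b"
proof -
  define pa where "pa = max (a - h) 0"
  define pb where "pb = max (b - h) 0"
  have "0 \<le> pa" "0 \<le> pb" unfolding pa_def pb_def by auto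
  have "v * a + (1 - v) * b - h = v * (a - h) + (1 - v) * (b - h)" by (simp add: algebra_simps)
  also have "\<dots> \<le> v * pa + (1 - v) * pb"
    using v unfolding pa_def pb_def by (intro add_mono mult_left_mono) auto
  finally have "max (v * a + (1 - v) * b - h) 0 \<le> v * pa + (1 - v) * pb"
    using v \<open>0 \<le> pa\<close> \<open>0 \<le> pb\<close> by simp
  then have "sq_excess h (v * a + (1 - v) * b) \<le> (v * pa + (1 - v) * pb)^2"
    unfolding sq_excess_def by (rule power_mono) simp
  also have "\<dots> = v * pa^2 + (1 - v) * pb^2 - v * (1 - v) * (pa - pb)^2"
    by (simp add: power2_eq_square algebra_simps)
  also have "\<dots> \<le> v * pa^2 + (1 - v) * pb^2" using v by simp
  finally show ?thesis unfolding sq_excess_def pa_def pb_def .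
qed

lemma sq_excess_mix_le_snd:
  assumes v: "0 \<le> v" "v \<le> 1" and "a \<le> h"
  shows "sq_excess h (v * a + (1 - v) * b) \<le> (1 - v)^2 * sq_excess h b"
proof -
  have "v * a + (1 - v) * b - h = v * (a - h) + (1 - v) * (b - h)" by (simp add: algebra_simps)
  also have "\<dots> \<le> (1 - v) * max (b - h) 0"
    using assms by (smt (verit) max.cobounded1 mult_left_mono mult_nonneg_nonpos)
  finally have "max (v * a + (1 - v) * b - h) 0 \<le> (1 - v) * max (b - h) 0" using v by simp
  then have "sq_excess h (v * a + (1 - v) * b) \<le> ((1 - v) * max (b - h) 0)^2"
    unfolding sq_excess_def by (rule power_mono) simp
  then show ?thesis unfolding sq_excess_def by (simp add: power_mult_distrib)
qed

lemma sq_excess_mix_le_fst: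
  assumes "0 \<le> v" "v \<le> 1" and "b \<le> h"
  shows "sq_excess h (v * a + (1 - v) * b) \<le> v^2 * sq_excess h a"
  using sq_excess_mix_le_snd[of "1 - v" b h a] assms by (simp add: algebra_simps)

definition total_excess :: "nat \<Rightarrow> real \<Rightarrow> (nat \<Rightarrow> real) \<Rightarrow> real" where
  "total_excess N h x = (\<Sum>k\<in>{1..N-1}. sq_excess h (x k))"

text \<open>Invariance is only available for bounded test functions, hence the truncation at level K.\<close>
definition truncated_excess :: "nat \<Rightarrow> real \<Rightarrow> nat \<Rightarrow> (nat \<Rightarrow> real) \<Rightarrow> real" where
  "truncated_excess N h K x = min (total_excess N h x) (real K)"

lemma abs_truncated_excess_le: "\<bar>truncated_excess N h K x\<bar> \<le> real K"
proof -
  have "0 \<le> total_excess N h x"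
    unfolding total_excess_def by (intro sum_nonneg) (simp add: sq_excess_nonneg)
  then show ?thesis unfolding truncated_excess_def by simp
qed

lemma borel_measurable_truncated_excess:
  "truncated_excess N h K \<in> borel_measurable (opinion_space N)"
proof -
  have "(\<lambda>x. x k) \<in> borel_measurable (opinion_space N)" if "k \<in> {1..N-1}" for k
    unfolding opinion_space_def using that by (intro measurable_component_singleton) auto
  moreover have sq: "sq_excess h \<in> borel_measurable borel" unfolding sq_excess_def by measurable
  ultimately have "total_excess N h \<in> borel_measurable (opinion_space N)"
    unfolding total_excess_def by (intro borel_measurable_sum measurable_compose[OF _ sq]) auto
  then show ?thesis unfolding truncated_excess_def by (intro borel_measurable_min) auto
qed

lemma total_excess_update:
  assumes e: "(i, j) \<in> opinion_edges N" and N: "N \<ge> 2"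
  shows "total_excess N h (opinion_update N i j v x) - total_excess N h x =
    (sq_excess h (v * x i + (1 - v) * x j) - sq_excess h (x i))
    + (if j \<in> {1..N-1} then sq_excess h (v * x i + (1 - v) * x j) - sq_excess h (x j) else 0)"
proof -
  define I where "I = {1..N-1}"
  define g where "g l =
    (if l \<in> {i, j} then sq_excess h (v * x i + (1 - v) * x j) - sq_excess h (x l) else 0)" for l
  have i: "i \<in> I" "i \<noteq> j" using opinion_edgeD[OF e N] unfolding I_def by auto
  have "total_excess N h (opinion_update N i j v x) - total_excess N h x = sum g I"
    unfolding total_excess_def I_def[symmetric] sum_subtractf[symmetric]
    by (rule sum.cong) (auto simp: g_def opinion_update_def internal_vertices_def I_def)
  also have "\<dots> = g i + sum g (I - {i})"
    using i by (simp add: I_def sum.remove)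
  also have "sum g (I - {i}) = (if j \<in> I then g j else 0)"
    using i by (simp add: g_def I_def sum.delta)
  finally show ?thesis using i unfolding g_def I_def by simp
qed

lemma set_integrable_truncated_excess_increment:
  "set_integrable lborel {0..1}
     (\<lambda>v. truncated_excess N h K (opinion_update N i j v x) - truncated_excess N h K x)"
proof (rule set_integrable_unit_bounded)
  show "(\<lambda>v. truncated_excess N h K (opinion_update N i j v x) - truncated_excess N h K x)
      \<in> borel_measurable lborel"
    unfolding truncated_excess_def total_excess_def sq_excess_def opinion_update_def by measurable
  show "\<bar>truncated_excess N h K (opinion_update N i j v x) - truncated_excess N h K x\<bar> \<le> 2 * real K"
    for v using abs_truncated_excess_le[of N h K x]
      abs_truncated_excess_le[of N h K "opinion_update N i j v x"] by linarith
qed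

lemma edge_increment_truncated_excess_le:
  assumes "total_excess N h x < real K"
    and "\<And>v. 0 \<le> v \<Longrightarrow> v \<le> 1 \<Longrightarrow>
      total_excess N h (opinion_update N i j v x) - total_excess N h x \<le> a + b * v + c * v^2"
  shows "edge_increment N (truncated_excess N h K) i j x \<le> a + b / 2 + c / 3"
proof (rule unit_integral_le_quadratic[OF set_integrable_truncated_excess_increment])
  fix v :: real assume "0 \<le> v" "v \<le> 1"
  then show "truncated_excess N h K (opinion_update N i j v x) - truncated_excess N h K x
      \<le> a + b * v + c * v^2"
    using assms unfolding truncated_excess_def by force
qed

lemma edge_increment_truncated_excess_nonpos:
  assumes e: "(i, j) \<in> opinion_edges N" and N: "N \<ge> 2" and "x 0 \<le> h" "x N \<le> h"
  shows "edge_increment N (truncated_excess N h K) i j x \<le> 0"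
proof (cases "total_excess N h x < real K")
  case False
  have "edge_increment N (truncated_excess N h K) i j x \<le> 0 + 0 / 2 + 0 / 3"
    using False
    by (intro unit_integral_le_quadratic[OF set_integrable_truncated_excess_increment])
       (simp add: truncated_excess_def)
  then show ?thesis by simp
next
  case True
  define p where "p = sq_excess h (x i)"
  define q where "q = sq_excess h (x j)"
  show ?thesis
  proof (cases "j \<in> {1..N-1}")
    case True
    \<comment> \<open>convexity bounds the increment by the linear function (q - p) (1 - 2 v)\<close>
    have "edge_increment N (truncated_excess N h K) i j x \<le> (q - p) + 2 * (p - q) / 2 + 0 / 3"
    proof (rule edge_increment_truncated_excess_le[OF \<open>total_excess N h x < real K\<close>])
      fix v :: real assume v: "0 \<le> v" "v \<le> 1"
      show "total_excess N h (opinion_update N i j v x) - total_excess N h x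
          \<le> (q - p) + 2 * (p - q) * v + 0 * v^2"
        using True sq_excess_convex[OF v, of h "x i" "x j"]
        by (simp add: total_excess_update[OF e N] p_def q_def algebra_simps)
    qed
    then show ?thesis by (simp add: field_simps)
  next
    case False
    then have "j = 0 \<or> j = N" using opinion_edgeD[OF e N] by auto
    then have "q = 0" using assms(3,4) by (auto simp: q_def sq_excess_eq_0)
    have "edge_increment N (truncated_excess N h K) i j x \<le> - p + p / 2 + 0 / 3"
    proof (rule edge_increment_truncated_excess_le[OF \<open>total_excess N h x < real K\<close>])
      fix v :: real assume v: "0 \<le> v" "v \<le> 1"
      have "sq_excess h (v * x i + (1 - v) * x j) \<le> v * p"
        using sq_excess_convex[OF v, of h "x i" "x j"] \<open>q = 0\<close> by (simp add: p_def q_def)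
      then show "total_excess N h (opinion_update N i j v x) - total_excess N h x
          \<le> - p + p * v + 0 * v^2"
        unfolding total_excess_update[OF e N] if_not_P[OF False] p_def[symmetric]
        by (simp add: algebra_simps)
    qed
    then show ?thesis using sq_excess_nonneg[of h "x i"] by (simp add: p_def)
  qed
qed

lemma edge_increment_truncated_excess_neg_source:
  assumes e: "(i, j) \<in> opinion_edges N" and N: "N \<ge> 2" and K: "total_excess N h x < real K"
    and "h < x i" "x j \<le> h"
  shows "edge_increment N (truncated_excess N h K) i j x < 0"
proof -
  define p where "p = sq_excess h (x i)"
  have "0 < p" unfolding p_def using \<open>h < x i\<close> by (rule sq_excess_pos)
  have q: "sq_excess h (x j) = 0" using \<open>x j \<le> h\<close> by (rule sq_excess_eq_0)
  have "edge_increment N (truncated_excess N h K) i j x \<le> - p + 0 / 2 + 2 * p / 3"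
  proof (rule edge_increment_truncated_excess_le[OF K])
    fix v :: real assume v: "0 \<le> v" "v \<le> 1"
    have "v^2 * p \<le> 2 * p * v^2" using \<open>0 < p\<close> by simp
    then show "total_excess N h (opinion_update N i j v x) - total_excess N h x
        \<le> - p + 0 * v + 2 * p * v^2"
      using q sq_excess_mix_le_fst[OF v \<open>x j \<le> h\<close>, of "x i"]
      by (simp add: total_excess_update[OF e N] p_def algebra_simps)
  qed
  then show ?thesis using \<open>0 < p\<close> by simp
qed

lemma edge_increment_truncated_excess_neg_target:
  assumes e: "(i, j) \<in> opinion_edges N" and N: "N \<ge> 2" and K: "total_excess N h x < real K"
    and "x i \<le> h" "h < x j" "j \<in> {1..N-1}"
  shows "edge_increment N (truncated_excess N h K) i j x < 0"
proof -
  define q where "q = sq_excess h (x j)"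
  have "0 < q" unfolding q_def using \<open>h < x j\<close> by (rule sq_excess_pos)
  have p: "sq_excess h (x i) = 0" using \<open>x i \<le> h\<close> by (rule sq_excess_eq_0)
  have "edge_increment N (truncated_excess N h K) i j x \<le> q + (- 4 * q) / 2 + 2 * q / 3"
  proof (rule edge_increment_truncated_excess_le[OF K])
    fix v :: real assume v: "0 \<le> v" "v \<le> 1"
    have "total_excess N h (opinion_update N i j v x) - total_excess N h x
        \<le> 2 * ((1 - v)^2 * q) - q"
      using \<open>j \<in> {1..N-1}\<close> sq_excess_mix_le_snd[OF v \<open>x i \<le> h\<close>, of "x j"] p
      by (simp add: total_excess_update[OF e N] q_def)
    also have "\<dots> = q + (- 4 * q) * v + (2 * q) * v^2" by (simp add: power2_eq_square algebra_simps)
    finally show "total_excess N h (opinion_update N i j v x) - total_excess N h x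
        \<le> q + (- 4 * q) * v + (2 * q) * v^2" .
  qed
  then show ?thesis using \<open>0 < q\<close> by simp
qed

lemma opinion_generator_truncated_excess_nonpos:
  assumes "N \<ge> 2" "x 0 \<le> h" "x N \<le> h"
  shows "opinion_generator N (truncated_excess N h K) x \<le> 0"
  unfolding opinion_generator_def
  by (rule sum_nonpos) (use edge_increment_truncated_excess_nonpos[OF _ assms] in auto)

lemma opinion_generator_truncated_excess_neg:
  assumes N: "N \<ge> 2" and boundary: "x 0 \<le> h" "x N \<le> h" and K: "total_excess N h x < real K"
    and above: "\<exists>k\<in>{1..N-1}. h < x k"
  shows "opinion_generator N (truncated_excess N h K) x < 0"
proof -
  define k where "k = (LEAST k. k \<in> {1..N-1} \<and> h < x k)"
  have k: "k \<in> {1..N-1}" "h < x k"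
    using LeastI_ex[of "\<lambda>k. k \<in> {1..N-1} \<and> h < x k"] above unfolding k_def by blast+
  \<comment> \<open>the edge entering the leftmost internal vertex above h has strictly negative increment\<close>
  obtain i j where e: "(i, j) \<in> opinion_edges N"
    and neg: "edge_increment N (truncated_excess N h K) i j x < 0"
  proof (cases "k = 1")
    case True
    have e: "(1, 0) \<in> opinion_edges N" unfolding opinion_edges_def by simp
    show ?thesis
      using that[OF e] edge_increment_truncated_excess_neg_source[OF e N K] k True boundary by simp
  next
    case False
    have e: "(k - 1, k) \<in> opinion_edges N" unfolding opinion_edges_def using False k by auto
    have "x (k - 1) \<le> h"
      using not_less_Least[of "k - 1" "\<lambda>k. k \<in> {1..N-1} \<and> h < x k"] False k
      unfolding k_def[symmetric] by fastforce
    then show ?thesis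
      using that[OF e] edge_increment_truncated_excess_neg_target[OF e N K] k by simp
  qed
  have "opinion_generator N (truncated_excess N h K) x < (\<Sum>e\<in>opinion_edges N. 0)"
    unfolding opinion_generator_def
  proof (rule sum_strict_mono_ex1[OF finite_opinion_edges])
    show "\<forall>e\<in>opinion_edges N.
        (case e of (i, j) \<Rightarrow> edge_increment N (truncated_excess N h K) i j x) \<le> 0"
      using edge_increment_truncated_excess_nonpos[OF _ N boundary] by auto
    show "\<exists>e\<in>opinion_edges N.
        (case e of (i, j) \<Rightarrow> edge_increment N (truncated_excess N h K) i j x) < 0"
      using e neg by force
  qed
  then show ?thesis by simp
qed

section \<open>The generator on quadratic observables\<close>

definition updated_vertices :: "nat \<Rightarrow> nat \<Rightarrow> nat \<Rightarrow> nat set" where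
  "updated_vertices N i j = {i, j} \<inter> internal_vertices N"

lemma opinion_update_eq:
  "opinion_update N i j v x k =
    (if k \<in> updated_vertices N i j then v * x i + (1 - v) * x j else x k)"
  unfolding opinion_update_def updated_vertices_def by simp

definition edge_mean_jump :: "nat \<Rightarrow> nat \<Rightarrow> nat \<Rightarrow> nat \<Rightarrow> (nat \<Rightarrow> real) \<Rightarrow> real" where
  "edge_mean_jump N i j k x = (if k \<in> updated_vertices N i j then (x i + x j) / 2 - x k else 0)"

definition edge_jump_cov :: "nat \<Rightarrow> nat \<Rightarrow> nat \<Rightarrow> nat \<Rightarrow> nat \<Rightarrow> (nat \<Rightarrow> real) \<Rightarrow> real" where
  "edge_jump_cov N i j k l x =
     (if k \<in> updated_vertices N i j \<and> l \<in> updated_vertices N i j then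
        (if k = l then (x i - x j)^2 / 3 else - ((x i - x j)^2) / 6)
      else 0)"

definition discrete_laplacian :: "nat \<Rightarrow> (nat \<Rightarrow> real) \<Rightarrow> nat \<Rightarrow> real" where
  "discrete_laplacian N x k =
    (if k \<in> internal_vertices N then (x (k-1) + x (k+1)) / 2 - x k else 0)"

definition clip :: "real \<Rightarrow> real \<Rightarrow> real" where
  "clip h t = max 0 (min h t)"

text \<open>On configurations with values in [0, h], where the invariant measure lives, this is
  x k * x l; the clipping makes it a bounded test function.\<close>
definition clipped_product :: "real \<Rightarrow> nat \<Rightarrow> nat \<Rightarrow> (nat \<Rightarrow> real) \<Rightarrow> real" where
  "clipped_product h k l y = clip h (y k) * clip h (y l)"

lemma abs_clipped_product_le: "0 \<le> h \<Longrightarrow> \<bar>clipped_product h k l y\<bar> \<le> h * h"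
  unfolding clipped_product_def clip_def abs_mult by (intro mult_mono) auto

lemma borel_measurable_clipped_product:
  assumes "k \<le> N" "l \<le> N"
  shows "clipped_product h k l \<in> borel_measurable (opinion_space N)"
proof -
  have c: "clip h \<in> borel_measurable borel" unfolding clip_def by measurable
  have "(\<lambda>y. y a) \<in> borel_measurable (opinion_space N)" if "a \<le> N" for a
    unfolding opinion_space_def using that by (intro measurable_component_singleton) auto
  with assms show ?thesis unfolding clipped_product_def
    by (intro borel_measurable_times measurable_compose[OF _ c]) auto
qed

lemma opinion_update_bounded:
  assumes e: "(i, j) \<in> opinion_edges N" and N: "N \<ge> 2" and "m \<le> N"
    and x: "\<And>m. m \<le> N \<Longrightarrow> 0 \<le> x m \<and> x m \<le> h" and v: "0 \<le> v" "v \<le> 1"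
  shows "0 \<le> opinion_update N i j v x m \<and> opinion_update N i j v x m \<le> h"
proof -
  have ij: "i \<le> N" "j \<le> N" using opinion_edgeD[OF e N] by auto
  have "v * x i + (1 - v) * x j \<le> v * h + (1 - v) * h"
    using x[OF ij(1)] x[OF ij(2)] v by (intro add_mono mult_left_mono) auto
  moreover have "0 \<le> v * x i + (1 - v) * x j" using x[OF ij(1)] x[OF ij(2)] v by simp
  ultimately show ?thesis
    unfolding opinion_update_eq using x[OF \<open>m \<le> N\<close>] by (auto simp: algebra_simps)
qed

lemma edge_increment_clipped_product:
  assumes e: "(i, j) \<in> opinion_edges N" and N: "N \<ge> 2" and k: "k \<le> N" and l: "l \<le> N"
    and x: "\<And>m. m \<le> N \<Longrightarrow> 0 \<le> x m \<and> x m \<le> h"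
  shows "edge_increment N (clipped_product h k l) i j x =
    x l * edge_mean_jump N i j k x + x k * edge_mean_jump N i j l x + edge_jump_cov N i j k l x"
proof -
  let ?y = "\<lambda>v. opinion_update N i j v x"
  let ?U = "updated_vertices N i j"
  have "i \<noteq> j" using opinion_edgeD[OF e N] by auto
  have "edge_increment N (clipped_product h k l) i j x
      = (LINT v:{0..1}|lborel. ?y v k * ?y v l - x k * x l)"
    using opinion_update_bounded[OF e N _ x] x k l
    by (intro set_lebesgue_integral_cong) (auto simp: clipped_product_def clip_def)
  also have "\<dots> = x l * edge_mean_jump N i j k x + x k * edge_mean_jump N i j l x
      + edge_jump_cov N i j k l x"
  proof (cases "k \<in> ?U"; cases "l \<in> ?U")
    assume "k \<in> ?U" "l \<in> ?U"
    then have "k \<in> {i, j}" "l \<in> {i, j}" unfolding updated_vertices_def by auto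
    have "(LINT v:{0..1}|lborel. ?y v k * ?y v l - x k * x l)
        = (LINT v:{0..1}|lborel.
            (x j^2 - x k * x l) + 2 * x j * (x i - x j) * v + (x i - x j)^2 * v^2)"
      using \<open>k \<in> ?U\<close> \<open>l \<in> ?U\<close>
      by (intro set_lebesgue_integral_cong)
        (auto simp: opinion_update_eq power2_eq_square algebra_simps)
    also have "\<dots> = x l * edge_mean_jump N i j k x + x k * edge_mean_jump N i j l x
        + edge_jump_cov N i j k l x"
      using \<open>k \<in> ?U\<close> \<open>l \<in> ?U\<close> \<open>k \<in> {i, j}\<close> \<open>l \<in> {i, j}\<close> \<open>i \<noteq> j\<close>
      unfolding unit_integral_quadratic edge_mean_jump_def edge_jump_cov_def
      by (auto simp: power2_eq_square field_simps)
    finally show ?thesis .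
  next
    assume "k \<in> ?U" "l \<notin> ?U"
    have "(LINT v:{0..1}|lborel. ?y v k * ?y v l - x k * x l)
        = (LINT v:{0..1}|lborel. (x j * x l - x k * x l) + (x i - x j) * x l * v + 0 * v^2)"
      using \<open>k \<in> ?U\<close> \<open>l \<notin> ?U\<close>
      by (intro set_lebesgue_integral_cong) (auto simp: opinion_update_eq algebra_simps)
    then show ?thesis
      using \<open>k \<in> ?U\<close> \<open>l \<notin> ?U\<close>
      unfolding unit_integral_quadratic edge_mean_jump_def edge_jump_cov_def
      by (simp add: field_simps)
  next
    assume "k \<notin> ?U" "l \<in> ?U"
    have "(LINT v:{0..1}|lborel. ?y v k * ?y v l - x k * x l)
        = (LINT v:{0..1}|lborel. (x j * x k - x k * x l) + (x i - x j) * x k * v + 0 * v^2)"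
      using \<open>k \<notin> ?U\<close> \<open>l \<in> ?U\<close>
      by (intro set_lebesgue_integral_cong) (auto simp: opinion_update_eq algebra_simps)
    then show ?thesis
      using \<open>k \<notin> ?U\<close> \<open>l \<in> ?U\<close>
      unfolding unit_integral_quadratic edge_mean_jump_def edge_jump_cov_def
      by (simp add: field_simps)
  next
    assume "k \<notin> ?U" "l \<notin> ?U"
    then show ?thesis by (simp add: opinion_update_eq edge_mean_jump_def edge_jump_cov_def)
  qed
  finally show ?thesis .
qed

lemma sum_edge_mean_jump:
  "(\<Sum>m<N. edge_mean_jump N m (Suc m) k x) = discrete_laplacian N x k"
proof (cases "k \<in> internal_vertices N")
  case True
  have "(\<Sum>m<N. edge_mean_jump N m (Suc m) k x) = (\<Sum>m\<in>{k-1, k}. edge_mean_jump N m (Suc m) k x)"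
    using True by (intro sum.mono_neutral_right)
      (auto simp: edge_mean_jump_def updated_vertices_def internal_vertices_def)
  also have "\<dots> = discrete_laplacian N x k"
    using True by (auto simp: edge_mean_jump_def updated_vertices_def internal_vertices_def
        discrete_laplacian_def field_simps)
  finally show ?thesis .
next
  case False
  then show ?thesis by (simp add: edge_mean_jump_def updated_vertices_def discrete_laplacian_def)
qed

lemma sum_edge_jump_cov:
  assumes "1 \<le> k" "k \<le> l" "l \<le> N - 1"
  shows "(\<Sum>m<N. edge_jump_cov N m (Suc m) k l x) =
    (if l = k then (x (k-1) - x k)^2 / 3 + (x k - x (k+1))^2 / 3
     else if l = k + 1 then - ((x k - x l)^2) / 6 else 0)"
proof -
  consider "l = k" | "l = k + 1" | "l \<noteq> k \<and> l \<noteq> k + 1" by blast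
  then show ?thesis
  proof cases
    case 1
    have "(\<Sum>m<N. edge_jump_cov N m (Suc m) k l x) = (\<Sum>m\<in>{k-1, k}. edge_jump_cov N m (Suc m) k l x)"
      using 1 assms by (intro sum.mono_neutral_right)
        (auto simp: edge_jump_cov_def updated_vertices_def internal_vertices_def)
    then show ?thesis
      using 1 assms by (auto simp: edge_jump_cov_def updated_vertices_def internal_vertices_def)
  next
    case 2
    have "(\<Sum>m<N. edge_jump_cov N m (Suc m) k l x) = (\<Sum>m\<in>{k}. edge_jump_cov N m (Suc m) k l x)"
      using 2 assms by (intro sum.mono_neutral_right)
        (auto simp: edge_jump_cov_def updated_vertices_def internal_vertices_def)
    then show ?thesis
      using 2 assms by (auto simp: edge_jump_cov_def updated_vertices_def internal_vertices_def)
  next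
    case 3
    then have "edge_jump_cov N m (Suc m) k l x = 0" for m
      using assms by (auto simp: edge_jump_cov_def updated_vertices_def)
    with 3 show ?thesis by simp
  qed
qed

lemma opinion_generator_clipped_product:
  assumes N: "N \<ge> 2" and k: "k \<le> N" and l: "l \<le> N"
    and x: "\<And>m. m \<le> N \<Longrightarrow> 0 \<le> x m \<and> x m \<le> h"
  shows "opinion_generator N (clipped_product h k l) x =
    x l * discrete_laplacian N x k + x k * discrete_laplacian N x l
    + (\<Sum>m<N. edge_jump_cov N m (Suc m) k l x)"
proof -
  define A where "A i j =
      x l * edge_mean_jump N i j k x + x k * edge_mean_jump N i j l x + edge_jump_cov N i j k l x"
    for i j
  have "opinion_generator N (clipped_product h k l) x = (\<Sum>(i, j)\<in>opinion_edges N. A i j)"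
    unfolding opinion_generator_def A_def
    by (intro sum.cong refl) (auto simp: edge_increment_clipped_product[where x = x, OF _ N k l x])
  also have "\<dots> = (\<Sum>m<N. A m (Suc m))"
  proof (rule sum_opinion_edges_as_path[OF N])
    have "updated_vertices N 1 0 = updated_vertices N 0 1"
      unfolding updated_vertices_def by auto
    then show "A 1 0 = A 0 1"
      unfolding A_def edge_mean_jump_def edge_jump_cov_def by (simp add: add.commute power2_commute)
  qed
  also have "\<dots> = x l * discrete_laplacian N x k + x k * discrete_laplacian N x l
      + (\<Sum>m<N. edge_jump_cov N m (Suc m) k l x)"
    unfolding A_def sum_edge_mean_jump[symmetric] by (simp add: sum.distrib sum_distrib_left)
  finally show ?thesis .
qed

lemma opinion_generator_clipped_product_interior:
  assumes N: "N \<ge> 2" and kl: "1 \<le> k" "k \<le> l" "l \<le> N - 1"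
    and x: "\<And>m. m \<le> N \<Longrightarrow> 0 \<le> x m \<and> x m \<le> h"
  shows "opinion_generator N (clipped_product h k l) x = moment_op (\<lambda>a b. x a * x b) k l"
proof -
  have "k \<le> N" "l \<le> N" "k \<in> internal_vertices N" "l \<in> internal_vertices N"
    using kl by (auto simp: internal_vertices_def)
  then show ?thesis
    using opinion_generator_clipped_product[where x = x, OF N \<open>k \<le> N\<close> \<open>l \<le> N\<close> x]
      sum_edge_jump_cov[OF kl, of x]
    unfolding moment_op_def discrete_laplacian_def by (simp add: power2_eq_square field_simps)
qed

lemma opinion_generator_clipped_product_left_boundary:
  assumes N: "N \<ge> 2" and "k \<le> N" and x: "\<And>m. m \<le> N \<Longrightarrow> 0 \<le> x m \<and> x m \<le> h"
  shows "opinion_generator N (clipped_product h k 0) x = x 0 * discrete_laplacian N x k"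
  using opinion_generator_clipped_product[where x = x, OF N \<open>k \<le> N\<close> le0 x]
  by (simp add: discrete_laplacian_def edge_jump_cov_def updated_vertices_def internal_vertices_def)

section \<open>Support and moment equations of the invariant measure\<close>

locale opinion_invariant_measure =
  fixes N :: nat and Tm Tp :: real and \<nu> :: "(nat \<Rightarrow> real) measure"
  assumes N_ge_2: "N \<ge> 2" and Tm_pos: "Tm > 0"
    and invariant: "opinion_invariant N Tm Tp \<nu>"
begin

sublocale prob_space \<nu>
  using invariant by (simp add: opinion_invariant_def)

lemma sets_eq_opinion_space: "sets \<nu> = sets (opinion_space N)"
  using invariant by (simp add: opinion_invariant_def)

lemma borel_measurable_eq_opinion_space: "borel_measurable \<nu> = borel_measurable (opinion_space N)"
  using measurable_cong_sets[OF sets_eq_opinion_space refl] .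

lemma AE_boundary_nonneg: "AE x in \<nu>. x 0 = Tm \<and> x N = Tp \<and> (\<forall>k\<in>{0..N}. 0 \<le> x k)"
  using invariant by (simp add: opinion_invariant_def)

lemma integral_opinion_generator_eq_0:
  assumes "f \<in> borel_measurable (opinion_space N)" "\<And>x. \<bar>f x\<bar> \<le> B"
  shows "(\<integral>x. opinion_generator N f x \<partial>\<nu>) = 0"
  using invariant assms unfolding opinion_invariant_def by blast

lemma integrable_opinion_generator:
  assumes f: "f \<in> borel_measurable (opinion_space N)" and B: "\<And>x. \<bar>f x\<bar> \<le> B"
  shows "integrable \<nu> (opinion_generator N f)"
proof (rule integrable_const_bound)
  show "AE x in \<nu>. norm (opinion_generator N f x) \<le> real (card (opinion_edges N)) * (2 * B)"
    using abs_opinion_generator_le[OF B] by simp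
  show "opinion_generator N f \<in> borel_measurable \<nu>"
    unfolding borel_measurable_eq_opinion_space
    by (rule borel_measurable_opinion_generator[OF f N_ge_2])
qed

definition T_max :: real where
  "T_max = max Tm Tp"

lemma AE_internal_le_T_max: "AE x in \<nu>. \<forall>k\<in>{1..N-1}. x k \<le> T_max"
proof -
  have "AE x in \<nu>. \<not> (total_excess N T_max x < real K \<and> (\<exists>k\<in>{1..N-1}. T_max < x k))" for K
  proof -
    let ?L = "opinion_generator N (truncated_excess N T_max K)"
    note f = borel_measurable_truncated_excess abs_truncated_excess_le
    have boundary: "AE x in \<nu>. x 0 \<le> T_max \<and> x N \<le> T_max"
      using AE_boundary_nonneg by eventually_elim (simp add: T_max_def)
    then have "AE x in \<nu>. 0 \<le> - ?L x"
      by eventually_elim (simp add: opinion_generator_truncated_excess_nonpos[OF N_ge_2])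
    moreover have "(\<integral>x. - ?L x \<partial>\<nu>) = 0"
      using integral_opinion_generator_eq_0[OF f] by simp
    ultimately have "AE x in \<nu>. ?L x = 0"
      using integral_nonneg_eq_0_iff_AE[of \<nu> "\<lambda>x. - ?L x"] integrable_opinion_generator[OF f]
      by simp
    with boundary show ?thesis
      by eventually_elim (use opinion_generator_truncated_excess_neg[OF N_ge_2] in force)
  qed
  then have "AE x in \<nu>. \<forall>K::nat. \<not> (total_excess N T_max x < real K \<and> (\<exists>k\<in>{1..N-1}. T_max < x k))"
    unfolding AE_all_countable by blast
  then show ?thesis
  proof eventually_elim
    case (elim x)
    obtain K :: nat where "total_excess N T_max x < real K" using reals_Archimedean2 by blast
    with elim show ?case by auto
  qed
qed

lemma AE_opinions_in_range:
  "AE x in \<nu>. x 0 = Tm \<and> x N = Tp \<and> (\<forall>m\<le>N. 0 \<le> x m \<and> x m \<le> T_max)"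
  using AE_boundary_nonneg AE_internal_le_T_max
proof eventually_elim
  case (elim x)
  have "x m \<le> T_max" if "m \<le> N" for m
    using that elim by (cases "m = 0 \<or> m = N") (auto simp: T_max_def)
  with elim show ?case by auto
qed

lemma borel_measurable_coordinate: "a \<le> N \<Longrightarrow> (\<lambda>x. x a) \<in> borel_measurable \<nu>"
  unfolding borel_measurable_eq_opinion_space opinion_space_def
  by (intro measurable_component_singleton) auto

lemma integrable_coordinate:
  assumes "a \<le> N"
  shows "integrable \<nu> (\<lambda>x. x a)"
proof (rule integrable_const_bound[where B = T_max])
  show "AE x in \<nu>. norm (x a) \<le> T_max"
    using AE_opinions_in_range by eventually_elim (use assms in auto)
  show "(\<lambda>x. x a) \<in> borel_measurable \<nu>" using borel_measurable_coordinate[OF assms] .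
qed

lemma integrable_coordinate_product:
  assumes "a \<le> N" "b \<le> N"
  shows "integrable \<nu> (\<lambda>x. x a * x b)"
proof (rule integrable_const_bound[where B = "T_max * T_max"])
  show "AE x in \<nu>. norm (x a * x b) \<le> T_max * T_max"
    using AE_opinions_in_range
    by eventually_elim (use assms in \<open>auto simp: abs_mult intro!: mult_mono\<close>)
  show "(\<lambda>x. x a * x b) \<in> borel_measurable \<nu>"
    using borel_measurable_coordinate assms by simp
qed

lemma mean_boundary: "(\<integral>x. x 0 \<partial>\<nu>) = Tm" "(\<integral>x. x N \<partial>\<nu>) = Tp"
proof -
  have "(\<integral>x. x 0 \<partial>\<nu>) = (\<integral>x. Tm \<partial>\<nu>)"
    by (rule integral_cong_AE) (use borel_measurable_coordinate[of 0] AE_boundary_nonneg in auto)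
  then show "(\<integral>x. x 0 \<partial>\<nu>) = Tm" by (simp add: prob_space)
  have "(\<integral>x. x N \<partial>\<nu>) = (\<integral>x. Tp \<partial>\<nu>)"
    by (rule integral_cong_AE) (use borel_measurable_coordinate[of N] AE_boundary_nonneg in auto)
  then show "(\<integral>x. x N \<partial>\<nu>) = Tp" by (simp add: prob_space)
qed

lemma second_moment_boundary:
  assumes "b \<le> N"
  shows "(\<integral>x. x 0 * x b \<partial>\<nu>) = Tm * (\<integral>x. x b \<partial>\<nu>)"
    and "(\<integral>x. x N * x b \<partial>\<nu>) = Tp * (\<integral>x. x b \<partial>\<nu>)"
proof -
  note [measurable] = borel_measurable_coordinate[of 0] borel_measurable_coordinate[of N]
    borel_measurable_coordinate[OF assms]
  have "(\<integral>x. x 0 * x b \<partial>\<nu>) = (\<integral>x. Tm * x b \<partial>\<nu>)"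
    by (rule integral_cong_AE) (use AE_boundary_nonneg in auto)
  then show "(\<integral>x. x 0 * x b \<partial>\<nu>) = Tm * (\<integral>x. x b \<partial>\<nu>)" by simp
  have "(\<integral>x. x N * x b \<partial>\<nu>) = (\<integral>x. Tp * x b \<partial>\<nu>)"
    by (rule integral_cong_AE) (use AE_boundary_nonneg in auto)
  then show "(\<integral>x. x N * x b \<partial>\<nu>) = Tp * (\<integral>x. x b \<partial>\<nu>)" by simp
qed

lemma integral_eq_0_if_AE_eq_generator_clipped_product:
  assumes "k \<le> N" "l \<le> N" and g: "g \<in> borel_measurable \<nu>"
    and AE_eq: "AE x in \<nu>. opinion_generator N (clipped_product T_max k l) x = g x"
  shows "(\<integral>x. g x \<partial>\<nu>) = 0"
proof -
  note f = borel_measurable_clipped_product[OF assms(1,2)]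
  have "0 \<le> T_max" using Tm_pos by (simp add: T_max_def)
  have "(\<integral>x. g x \<partial>\<nu>) = (\<integral>x. opinion_generator N (clipped_product T_max k l) x \<partial>\<nu>)"
    using AE_eq g borel_measurable_opinion_generator[OF f N_ge_2]
    by (intro integral_cong_AE) (auto simp: borel_measurable_eq_opinion_space elim: eventually_mono)
  also have "\<dots> = 0"
    using integral_opinion_generator_eq_0[OF f abs_clipped_product_le[OF \<open>0 \<le> T_max\<close>]] .
  finally show ?thesis .
qed

lemma mean_discrete_harmonic:
  assumes k: "1 \<le> k" "k \<le> N - 1"
  shows "((\<integral>x. x (k-1) \<partial>\<nu>) + (\<integral>x. x (k+1) \<partial>\<nu>)) / 2 - (\<integral>x. x k \<partial>\<nu>) = 0"
proof -
  have idx: "k - 1 \<le> N" "k \<le> N" "k + 1 \<le> N" using k N_ge_2 by auto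
  have "k \<in> internal_vertices N" using k by (simp add: internal_vertices_def)
  \<comment> \<open>since x 0 = Tm > 0 a.s., the test function x k * x 0 yields the equation for the mean\<close>
  have "(\<integral>x. Tm * ((x (k-1) + x (k+1)) / 2 - x k) \<partial>\<nu>) = 0"
  proof (rule integral_eq_0_if_AE_eq_generator_clipped_product[OF idx(2) le0])
    show "(\<lambda>x. Tm * ((x (k-1) + x (k+1)) / 2 - x k)) \<in> borel_measurable \<nu>"
      using borel_measurable_coordinate idx by simp
    show "AE x in \<nu>. opinion_generator N (clipped_product T_max k 0) x
        = Tm * ((x (k-1) + x (k+1)) / 2 - x k)"
      using AE_opinions_in_range
      by eventually_elim
         (use opinion_generator_clipped_product_left_boundary[OF N_ge_2 idx(2)]
           \<open>k \<in> internal_vertices N\<close> in \<open>auto simp: discrete_laplacian_def\<close>)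
  qed
  then have "Tm * (((\<integral>x. x (k-1) \<partial>\<nu>) + (\<integral>x. x (k+1) \<partial>\<nu>)) / 2 - (\<integral>x. x k \<partial>\<nu>)) = 0"
    using integrable_coordinate idx by simp
  then show ?thesis using Tm_pos by simp
qed

lemma integral_moment_op_products:
  assumes kl: "1 \<le> k" "k \<le> l" "l \<le> N - 1"
  shows "(\<integral>x. moment_op (\<lambda>a b. x a * x b) k l \<partial>\<nu>) = moment_op (\<lambda>a b. \<integral>x. x a * x b \<partial>\<nu>) k l"
proof -
  have idx: "k - 1 \<le> N" "k \<le> N" "k + 1 \<le> N" "l - 1 \<le> N" "l \<le> N" "l + 1 \<le> N"
    using kl N_ge_2 by auto
  have swap: "(\<integral>x. x a * x b \<partial>\<nu>) = (\<integral>x. x b * x a \<partial>\<nu>)" for a b by (simp add: mult.commute)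
  show ?thesis
    using kl idx integrable_coordinate_product swap[of k l]
    by (cases "l = k"; cases "l = k + 1") (simp_all add: moment_op_def)
qed

lemma second_moment_op_eq_0:
  assumes kl: "1 \<le> k" "k \<le> l" "l \<le> N - 1"
  shows "moment_op (\<lambda>a b. \<integral>x. x a * x b \<partial>\<nu>) k l = 0"
proof -
  have idx: "k - 1 \<le> N" "k \<le> N" "k + 1 \<le> N" "l - 1 \<le> N" "l \<le> N" "l + 1 \<le> N"
    using kl N_ge_2 by auto
  have "(\<integral>x. moment_op (\<lambda>a b. x a * x b) k l \<partial>\<nu>) = 0"
  proof (rule integral_eq_0_if_AE_eq_generator_clipped_product[OF idx(2,5)])
    note [measurable] = idx[THEN borel_measurable_coordinate]
    show "(\<lambda>x. moment_op (\<lambda>a b. x a * x b) k l) \<in> borel_measurable \<nu>"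
      unfolding moment_op_def by measurable
    show "AE x in \<nu>. opinion_generator N (clipped_product T_max k l) x
        = moment_op (\<lambda>a b. x a * x b) k l"
      using AE_opinions_in_range
      by eventually_elim (simp add: opinion_generator_clipped_product_interior[OF N_ge_2 kl])
  qed
  then show ?thesis using integral_moment_op_products[OF kl] by simp
qed

lemma cov_le_C_tilde:
  assumes "k \<le> l" "l \<le> N"
  shows "opinion_cov \<nu> k l \<le> C_tilde N Tm Tp k l"
  unfolding opinion_cov_def
proof (rule cov_le_C_tilde_of_moment_equations[OF _ _ _ _ _ _ _ _ assms])
  show "1 \<le> N" using N_ge_2 by simp
  show "(\<integral>x. x 0 \<partial>\<nu>) = Tm" "(\<integral>x. x N \<partial>\<nu>) = Tp" by (fact mean_boundary)+
  show "((\<integral>x. x (k-1) \<partial>\<nu>) + (\<integral>x. x (k+1) \<partial>\<nu>)) / 2 - (\<integral>x. x k \<partial>\<nu>) = 0"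
    if "1 \<le> k" "k \<le> N - 1" for k
    using mean_discrete_harmonic[OF that] .
  show "(\<integral>x. x a * x b \<partial>\<nu>) = (\<integral>x. x b * x a \<partial>\<nu>)" for a b
    by (simp add: mult.commute)
  show "(\<integral>x. x 0 * x b \<partial>\<nu>) = Tm * (\<integral>x. x b \<partial>\<nu>)" "(\<integral>x. x N * x b \<partial>\<nu>) = Tp * (\<integral>x. x b \<partial>\<nu>)"
    if "b \<le> N" for b
    using second_moment_boundary[OF that] by simp_all
  show "moment_op (\<lambda>a b. \<integral>x. x a * x b \<partial>\<nu>) k l = 0" if "1 \<le> k" "k \<le> l" "l \<le> N - 1" for k l
    using second_moment_op_eq_0[OF that] .
qed

end

theorem proposition2p7:
  fixes N :: nat and Tm Tp :: real and \<nu> :: "(nat \<Rightarrow> real) measure" and k l :: nat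
  assumes "N \<ge> 2" and "Tm > 0" and "Tp > 0"
    and "opinion_invariant N Tm Tp \<nu>"
    and "k \<le> l" and "l \<le> N"
  shows "opinion_cov \<nu> k l \<le> C_tilde N Tm Tp k l"
proof -
  interpret opinion_invariant_measure N Tm Tp \<nu>
    using assms by unfold_locales
  show ?thesis using cov_le_C_tilde assms(5,6) .
qed

end
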